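(* Let $r,\sigma,s,c,\lambda,a,q,d,\gamma,b>0$ with $a<\lambda$, $b<\gamma$, $1-\lambda r>0$, $1-br>0$, and $\theta=\sqrt{2r/\sigma^2}$. For $w>1$ let $$G(w)=\frac{(1-\lambda r)\big((\ln w-1)w^2+\ln w+1\big)-cr\theta(w^2+1)}{\theta(1-ar)(w-1)^2}+\frac{s}{1-ar}-\frac{q}{1-br}-\frac{w+1}{\theta(w-1)}-\frac{2\big(\theta rd-(1-\gamma r)\ln w\big)w}{\theta(1-br)(w-1)^2}.$$ Assume there exists $\hat w>1$ with $G(\hat w)=0$ and $$0\le(1-br)(\hat w^2-1)+2\big(\theta rd-(1-\gamma r)\ln\hat w\big)\hat w<(1-br)(\hat w-1)^2.$$ Let $\bar x_2=\frac{q}{1-br}+\frac{\hat w+1}{\theta(\hat w-1)}+\frac{2(\theta rd-(1-\gamma r)\ln\hat w)\hat w}{\theta(1-br)(\hat w-1)^2}$, $\bar x_1=\bar x_2-\frac{\ln\hat w}{\theta}$, $$C_{21}=\frac{e^{-\theta\bar x_2}}{2r}\Big[(1-br)\Big(\bar x_2+\frac1\theta\Big)-q\Big],\quad C_{22}=\frac{e^{\theta\bar x_2}}{2r}\Big[(1-br)\Big(\bar x_2-\frac1\theta\Big)-q\Big],$$ $\varphi_2(x)=C_{21}e^{\theta x}+C_{22}e^{-\theta x}+\frac{q-x}{r}$, and $$W_2(x)=\begin{cases}-bx & x\ge\bar x_2\\ \varphi_2(x)&\bar x_1<x<\bar x_2\\ -b\bar x_2+d+\gamma(\bar x_2-x)&x\le\bar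 x_1.\end{cases}$$ Then $$\{x\in\mathbb{R}:W_2(x)>-bx\}=(-\infty,\bar x_2),\qquad\{x\in\mathbb{R}:W_2(x)=-bx\}=[\bar x_2,\infty).$$
   Context: This is the candidate equilibrium payoff of player P2 (the stopper) in the second type of Nash equilibrium of a linear impulse controller–stopper game: state $X_t=x+\sigma W_t+\sum_{\tau_n\le t}\delta_n$, P2 has running payoff $q-x$, gains $d+\gamma|\delta|$ at each impulse of P1, and terminal payoff $-bx$, discounted at rate $r$. *)

theory Defs
  imports Complex_Main
begin

end

theory Submission imports Defs begin

text \<open>
  On the continuation region put \<open>u = exp (\<theta> (x\<^sub>2 - x)) \<in> (1, w)\<close>. The smooth-fit
  constants turn \<open>\<phi>\<^sub>2 x + b x\<close> into \<open>((P - m)(u - 1)\<^sup>2 + 2 m (1 - u + u ln u)) / (2 r u)\<close>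
  with \<open>m = (1 - b r)/\<theta>\<close> and \<open>P = (1 - b r) x\<^sub>2 - q\<close>. Writing
  \<open>h t = (1 - t + t ln t)/(t - 1)\<^sup>2\<close>, the choice of \<open>x\<^sub>2\<close> together with \<open>b < \<gamma>\<close> gives
  \<open>P - m > -2 m h w\<close>, and \<open>h\<close> is decreasing on \<open>(1, \<infinity>)\<close>, so the numerator is at least
  \<open>2 m (u - 1)\<^sup>2 (h u - h w) \<ge> 0\<close>. Below \<open>x\<^sub>1\<close> the payoff exceeds \<open>-b x\<close> because
  \<open>\<gamma> > b\<close> and \<open>d > 0\<close>.
\<close>

lemma two_mul_diff_le_ln:
  assumes "1 \<le> (u::real)" shows "2 * (u - 1) \<le> (u + 1) * ln u"
proof -
  let ?g = "\<lambda>t::real. (t + 1) * ln t - 2 * (t - 1)"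
  have "?g 1 \<le> ?g u"
  proof (rule DERIV_nonneg_imp_nondecreasing[OF assms])
    fix t :: real assume t: "1 \<le> t" "t \<le> u"
    have "DERIV ?g t :> ln t + (t + 1) / t - 2"
      using t by (auto intro!: derivative_eq_intros simp: field_simps)
    moreover have "0 \<le> ln t + (t + 1) / t - 2"
      using ln_diff_le[of 1 t] t by (simp add: field_simps)
    ultimately show "\<exists>y. DERIV ?g t :> y \<and> 0 \<le> y" by blast
  qed
  then show ?thesis by simp
qed

lemma ln_defect_ratio_antimono:
  assumes "1 < (u::real)" "u \<le> w"
  shows "(1 - w + w * ln w) / (w - 1)^2 \<le> (1 - u + u * ln u) / (u - 1)^2"
proof (rule DERIV_nonpos_imp_nonincreasing[OF assms(2)])
  fix t :: real assume "u \<le> t" "t \<le> w"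
  then have t: "t > 1" using assms by simp
  let ?h = "\<lambda>t::real. (1 - t + t * ln t) / (t - 1)^2"
  have deriv: "DERIV ?h t :> ((ln t + t * (1 / t) - 1) * (t - 1)^2 - (1 - t + t * ln t) * (2 * (t - 1)))
                      / ((t - 1)^2)^2"
    using t by (auto intro!: derivative_eq_intros)
  have "(ln t + t * (1 / t) - 1) * (t - 1)^2 - (1 - t + t * ln t) * (2 * (t - 1))
      = (t - 1) * (2 * (t - 1) - (t + 1) * ln t)"
    using t by (simp add: algebra_simps power2_eq_square)
  moreover have "(t - 1) * (2 * (t - 1) - (t + 1) * ln t) \<le> 0"
    using two_mul_diff_le_ln[of t] t by (intro mult_nonneg_nonpos) auto
  ultimately have "((ln t + t * (1 / t) - 1) * (t - 1)^2 - (1 - t + t * ln t) * (2 * (t - 1)))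
                      / ((t - 1)^2)^2 \<le> 0"
    by (simp add: divide_nonpos_nonneg)
  with deriv show "\<exists>y. DERIV ?h t :> y \<and> y \<le> 0" by blast
qed

lemma smooth_fit_excess_eq:
  fixes \<theta> r \<beta> q x2 x :: real
  assumes "\<theta> > 0" "r > 0"
  defines "u \<equiv> exp (\<theta> * (x2 - x))"
  shows "exp (- \<theta> * x2) / (2 * r) * (\<beta> * (x2 + 1 / \<theta>) - q) * exp (\<theta> * x)
         + exp (\<theta> * x2) / (2 * r) * (\<beta> * (x2 - 1 / \<theta>) - q) * exp (- \<theta> * x)
         + (q - x) / r + (1 - \<beta>) / r * x
       = ((\<beta> * x2 - q - \<beta> / \<theta>) * (u - 1)^2 + 2 * (\<beta> / \<theta>) * (1 - u + u * ln u)) / (2 * r * u)"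
    (is "?lhs = _")
proof -
  define P where "P = \<beta> * x2 - q"
  define m where "m = \<beta> / \<theta>"
  define L where "L = ln u"
  have u: "u > 0" unfolding u_def by simp
  have "?lhs = (P + m) / (2 * r) * (exp (- \<theta> * x2) * exp (\<theta> * x))
      + (P - m) / (2 * r) * (exp (\<theta> * x2) * exp (- \<theta> * x))
      + ((q - x) / r + (1 - \<beta>) / r * x)"
    unfolding P_def m_def by (simp add: algebra_simps)
  also have "exp (- \<theta> * x2) * exp (\<theta> * x) = 1 / u"
    unfolding u_def by (simp add: exp_minus exp_diff field_simps flip: exp_add)
  also have "exp (\<theta> * x2) * exp (- \<theta> * x) = u"
    unfolding u_def by (simp add: algebra_simps flip: exp_add)
  also have "(q - x) / r + (1 - \<beta>) / r * x = (m * L - P) / r"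
    using assms(1,2) unfolding P_def m_def L_def u_def by (simp add: field_simps)
  also have "(P + m) / (2 * r) * (1 / u) + (P - m) / (2 * r) * u + (m * L - P) / r
      = ((P - m) * (u - 1)^2 + 2 * m * (1 - u + u * L)) / (2 * r * u)"
    using assms(2) u by (simp add: field_simps power2_eq_square)
  finally show ?thesis unfolding P_def m_def L_def .
qed

lemma smooth_fit_numerator_pos:
  fixes m D u w :: real
  assumes "m > 0" "1 < u" "u \<le> w"
    and "D > - 2 * m * ((1 - w + w * ln w) / (w - 1)^2)"
  shows "D * (u - 1)^2 + 2 * m * (1 - u + u * ln u) > 0"
proof -
  define hu where "hu = (1 - u + u * ln u) / (u - 1)^2"
  define hw where "hw = (1 - w + w * ln w) / (w - 1)^2"
  have u: "(u - 1)^2 > 0" using assms(2) by simp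
  have "D * (u - 1)^2 > - 2 * m * hw * (u - 1)^2"
    using assms(4) u unfolding hw_def by (rule mult_strict_right_mono)
  then have "D * (u - 1)^2 > - (2 * m * (u - 1)^2 * hw)" by (simp add: algebra_simps)
  moreover have "2 * m * (u - 1)^2 * hw \<le> 2 * m * (u - 1)^2 * hu"
    using ln_defect_ratio_antimono[OF assms(2,3)] assms(1) u unfolding hu_def hw_def
    by (intro mult_left_mono) auto
  moreover have "2 * m * (u - 1)^2 * hu = 2 * m * (1 - u + u * ln u)" using u unfolding hu_def by simp
  ultimately show ?thesis by linarith
qed

lemma threshold_gap_gt:
  fixes \<beta> \<theta> q K w :: real
  assumes "\<theta> > 0" "\<beta> > 0" "w > 1" "K > - \<beta> * ln w"
  shows "\<beta> * (q / \<beta> + (w + 1) / (\<theta> * (w - 1)) + 2 * K * w / (\<theta> * \<beta> * (w - 1)^2)) - q - \<beta> / \<theta>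
       > - 2 * (\<beta> / \<theta>) * ((1 - w + w * ln w) / (w - 1)^2)"
proof -
  define v where "v = w - 1"
  have v: "v > 0" "w + 1 = v + 2" using assms(3) unfolding v_def by auto
  have w: "(w - 1)^2 > 0" using assms(3) by simp
  have "\<beta> * (q / \<beta> + (w + 1) / (\<theta> * (w - 1)) + 2 * K * w / (\<theta> * \<beta> * (w - 1)^2)) - q - \<beta> / \<theta>
      = \<beta> * (v + 2) / (\<theta> * v) - \<beta> / \<theta> + 2 * K * w / (\<theta> * v^2)"
    using assms(2) unfolding v(2) v_def[symmetric] by (simp add: algebra_simps)
  also have "\<dots> = 2 * (\<beta> * v + K * w) / (\<theta> * v^2)"
    using assms(1) v(1) by (simp add: field_simps power2_eq_square)
  also have "\<dots> = 2 * (\<beta> * (w - 1) + K * w) / (\<theta> * (w - 1)^2)" unfolding v_def ..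
  also have "\<dots> > 2 * (\<beta> * (w - 1) - \<beta> * ln w * w) / (\<theta> * (w - 1)^2)"
  proof (rule divide_strict_right_mono)
    have "K * w > - \<beta> * ln w * w"
      using mult_strict_right_mono[OF assms(4)] assms(3) by simp
    then show "2 * (\<beta> * (w - 1) - \<beta> * ln w * w) < 2 * (\<beta> * (w - 1) + K * w)" by (simp add: algebra_simps)
  qed (use assms(1) w in simp)
  also have "2 * (\<beta> * (w - 1) - \<beta> * ln w * w) / (\<theta> * (w - 1)^2)
      = - 2 * (\<beta> / \<theta>) * ((1 - w + w * ln w) / (w - 1)^2)"
    by (simp add: field_simps) (simp add: minus_divide_left algebra_simps)
  finally show ?thesis .
qed

theorem lemmaA4:
  fixes r \<sigma> s c lam a q d \<gamma> b \<theta> w :: real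
    and x1 x2 C21 C22 :: real and G W2 \<phi>2 :: "real \<Rightarrow> real"
  assumes pos: "r > 0" "\<sigma> > 0" "s > 0" "c > 0" "lam > 0" "a > 0" "q > 0" "d > 0" "\<gamma> > 0" "b > 0"
    and "a < lam" "b < \<gamma>" "1 - lam * r > 0" "1 - b * r > 0"
    and theta: "\<theta> = sqrt (2 * r / \<sigma>^2)"
    and G_def: "G = (\<lambda>w. ((1 - lam * r) * ((ln w - 1) * w^2 + ln w + 1) - c * r * \<theta> * (w^2 + 1))
                      / (\<theta> * (1 - a * r) * (w - 1)^2)
               + s / (1 - a * r) - q / (1 - b * r) - (w + 1) / (\<theta> * (w - 1))
               - 2 * (\<theta> * r * d - (1 - \<gamma> * r) * ln w) * w / (\<theta> * (1 - b * r) * (w - 1)^2))"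
    and w: "w > 1" "G w = 0"
    and ineq: "0 \<le> (1 - b * r) * (w^2 - 1) + 2 * (\<theta> * r * d - (1 - \<gamma> * r) * ln w) * w"
              "(1 - b * r) * (w^2 - 1) + 2 * (\<theta> * r * d - (1 - \<gamma> * r) * ln w) * w < (1 - b * r) * (w - 1)^2"
    and x2: "x2 = q / (1 - b * r) + (w + 1) / (\<theta> * (w - 1))
               + 2 * (\<theta> * r * d - (1 - \<gamma> * r) * ln w) * w / (\<theta> * (1 - b * r) * (w - 1)^2)"
    and x1: "x1 = x2 - ln w / \<theta>"
    and C21: "C21 = exp (- \<theta> * x2) / (2 * r) * ((1 - b * r) * (x2 + 1 / \<theta>) - q)"
    and C22: "C22 = exp (\<theta> * x2) / (2 * r) * ((1 - b * r) * (x2 - 1 / \<theta>) - q)"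
    and phi: "\<And>x. \<phi>2 x = C21 * exp (\<theta> * x) + C22 * exp (- \<theta> * x) + (q - x) / r"
    and W2: "\<And>x. W2 x = (if x \<ge> x2 then - b * x
                          else if x1 < x then \<phi>2 x
                          else - b * x2 + d + \<gamma> * (x2 - x))"
  shows "{x. W2 x > - b * x} = {..<x2} \<and> {x. W2 x = - b * x} = {x2..}"
proof -
  have \<theta>: "\<theta> > 0" using theta pos by simp
  define \<beta> where "\<beta> = 1 - b * r"
  have \<beta>: "\<beta> > 0" using \<open>1 - b * r > 0\<close> unfolding \<beta>_def .
  have gap: "\<beta> * x2 - q - \<beta> / \<theta> > - 2 * (\<beta> / \<theta>) * ((1 - w + w * ln w) / (w - 1)^2)"
  proof -
    have "\<theta> * r * d > 0" "(\<gamma> - b) * r * ln w > 0"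
      using \<theta> pos \<open>b < \<gamma>\<close> w(1) by simp_all
    then have K: "\<theta> * r * d - (1 - \<gamma> * r) * ln w > - \<beta> * ln w"
      unfolding \<beta>_def by (simp add: algebra_simps)
    have x2\<beta>: "x2 = q / \<beta> + (w + 1) / (\<theta> * (w - 1))
        + 2 * (\<theta> * r * d - (1 - \<gamma> * r) * ln w) * w / (\<theta> * \<beta> * (w - 1)^2)"
      unfolding x2 \<beta>_def ..
    show ?thesis unfolding x2\<beta> by (rule threshold_gap_gt[OF \<theta> \<beta> w(1) K])
  qed
  have above: "W2 x > - b * x" if "x < x2" for x
  proof (cases "x1 < x")
    case True
    define u where "u = exp (\<theta> * (x2 - x))"
    have "0 < \<theta> * (x2 - x)" using \<open>x < x2\<close> \<theta> by simp
    moreover have "\<theta> * (x2 - x) < ln w" using True \<theta> unfolding x1 by (simp add: field_simps)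
    ultimately have "1 < u" "u < exp (ln w)" unfolding u_def by simp_all
    then have u: "1 < u" "u < w" using w(1) by simp_all
    have "W2 x + b * x = \<phi>2 x + (1 - \<beta>) / r * x"
      using W2 True \<open>x < x2\<close> pos(1) unfolding \<beta>_def by simp
    also have "\<dots> = ((\<beta> * x2 - q - \<beta> / \<theta>) * (u - 1)^2 + 2 * (\<beta> / \<theta>) * (1 - u + u * ln u))
                   / (2 * r * u)"
      unfolding phi C21 C22 u_def \<beta>_def[symmetric] using smooth_fit_excess_eq[OF \<theta> pos(1)] .
    also have "\<dots> > 0"
      using smooth_fit_numerator_pos[of "\<beta> / \<theta>" u w] \<beta> \<theta> u gap pos(1) by simp
    finally show ?thesis by simp
  next
    case False
    then have "W2 x = - b * x2 + d + \<gamma> * (x2 - x)" using W2 \<open>x < x2\<close> by simp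
    moreover have "(\<gamma> - b) * (x2 - x) > 0" using \<open>x < x2\<close> \<open>b < \<gamma>\<close> by simp
    ultimately show ?thesis using pos(8) by (simp add: algebra_simps)
  qed
  have beyond: "W2 x = - b * x" if "x \<ge> x2" for x using W2 that by simp
  have "W2 x > - b * x \<longleftrightarrow> x < x2" for x
    using above[of x] beyond[of x] by (cases "x < x2") auto
  moreover have "W2 x = - b * x \<longleftrightarrow> x2 \<le> x" for x
    using above[of x] beyond[of x] by (cases "x < x2") auto
  ultimately show ?thesis by auto
qed

end
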